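(* For all integers $n\ge2$ and $m\ge1$, \[ \mathrm{pw}(K_n\wedge K_m)=n+\max\!\left(0,\ m-\left\lfloor \tfrac n2\right\rfloor\right)-1. \]
   Context: Graphs are finite, simple and undirected. $K_n$ is the complete graph on $n$ vertices. The corona $G_1\wedge G_2$ is the graph obtained from the disjoint union of one copy of $G_1$ and $|V(G_1)|$ copies of $G_2$, one copy $G_2^{(x)}$ for each $x\in V(G_1)$, by joining each vertex $x$ of $G_1$ to all vertices of its copy $G_2^{(x)}$. $\mathrm{pw}$ denotes path-width (minimum over path-decompositions of the maximum bag size minus one). *)

theory Defs
  imports Main
begin

text \<open>Finite simple graphs: a vertex set V and an edge set E of 2-element subsets of V.\<close>

definition is_path_decomposition :: "'a set \<Rightarrow> 'a set set \<Rightarrow> 'a set list \<Rightarrow> bool" where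
  "is_path_decomposition V E bs \<longleftrightarrow>
     bs \<noteq> [] \<and>
     (\<forall>i<length bs. bs ! i \<subseteq> V) \<and>
     (\<forall>v\<in>V. \<exists>i<length bs. v \<in> bs ! i) \<and>
     (\<forall>e\<in>E. \<exists>i<length bs. e \<subseteq> bs ! i) \<and>
     (\<forall>v i j k. i \<le> j \<and> j \<le> k \<and> k < length bs \<and> v \<in> bs ! i \<and> v \<in> bs ! k
                  \<longrightarrow> v \<in> bs ! j)"

definition pd_width :: "'a set list \<Rightarrow> int" where
  "pd_width bs = int (Max (card ` set bs)) - 1"

definition pathwidth :: "'a set \<Rightarrow> 'a set set \<Rightarrow> int" where
  "pathwidth V E = (LEAST w. \<exists>bs. is_path_decomposition V E bs \<and> pd_width bs = w)"

definition complete_edges :: "'a set \<Rightarrow> 'a set set" where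
  "complete_edges V = {{x, y} | x y. x \<in> V \<and> y \<in> V \<and> x \<noteq> y}"

text \<open>Corona K_n \<and> K_m: core vertices (i, None) for i < n, the copy of K_m attached to
  core vertex i has vertices (i, Some j) for j < m.\<close>
definition corona_KK_vertices :: "nat \<Rightarrow> nat \<Rightarrow> (nat \<times> nat option) set" where
  "corona_KK_vertices n m = {(i, None) | i. i < n} \<union> {(i, Some j) | i j. i < n \<and> j < m}"

definition corona_KK_edges :: "nat \<Rightarrow> nat \<Rightarrow> (nat \<times> nat option) set set" where
  "corona_KK_edges n m =
     complete_edges {(i, None) | i. i < n}
     \<union> (\<Union>i<n. complete_edges {(i, Some j) | j. j < m})
     \<union> {{(i, None), (i, Some j)} | i j. i < n \<and> j < m}"

end

theory Submission
  imports Defs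
begin

text \<open>
  Upper bound: one middle bag holds the whole core K_n; every pendant copy K_m sits in a single
  bag next to its core vertex, to the left for the first \<lfloor>n/2\<rfloor> core vertices and to the right for
  the others, and each core vertex stays alive between its pendant bag and the middle bag. A side
  bag then holds one pendant copy and at most \<lceil>n/2\<rceil> core vertices.

  Lower bound: by the Helly property of path decompositions the core K_n lies in one bag s,
  and each closed neighbourhood of a core vertex i (a clique of size m+1) lies in some bag t(i).
  At least \<lceil>n/2\<rceil> of the t(i) lie on the same side of s; the one closest to s then contains
  all these core vertices together with its own pendant copy, giving a bag of size \<lceil>n/2\<rceil> + m.
\<close>

definition clique :: "'a set set \<Rightarrow> 'a set \<Rightarrow> bool" where
  "clique E S \<longleftrightarrow> (\<forall>x\<in>S. \<forall>y\<in>S. x \<noteq> y \<longrightarrow> {x, y} \<in> E)"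

lemma path_decomposition_bag_subset:
  "is_path_decomposition V E bs \<Longrightarrow> k < length bs \<Longrightarrow> bs ! k \<subseteq> V"
  unfolding is_path_decomposition_def by metis

lemma path_decomposition_covers_vertex:
  "is_path_decomposition V E bs \<Longrightarrow> v \<in> V \<Longrightarrow> \<exists>i<length bs. v \<in> bs ! i"
  unfolding is_path_decomposition_def by metis

lemma path_decomposition_covers_edge:
  "is_path_decomposition V E bs \<Longrightarrow> e \<in> E \<Longrightarrow> \<exists>i<length bs. e \<subseteq> bs ! i"
  unfolding is_path_decomposition_def by metis

lemma path_decomposition_convex:
  assumes "is_path_decomposition V E bs" "v \<in> bs ! i" "v \<in> bs ! k"
    and "min i k \<le> j" "j \<le> max i k" "max i k < length bs"
  shows "v \<in> bs ! j"
proof -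
  have convex: "v \<in> bs ! j" if "i' \<le> j" "j \<le> k'" "k' < length bs" "v \<in> bs ! i'" "v \<in> bs ! k'"
    for i' k'
    using assms(1) that unfolding is_path_decomposition_def by metis
  show ?thesis
    using assms(2-) convex[of i k] convex[of k i] by (cases "i \<le> k") (auto simp: min_def max_def)
qed

lemma subset_bag_between:
  assumes pd: "is_path_decomposition V E bs" and A: "A \<subseteq> bs ! s" and s: "s < length bs"
    and t: "\<And>a. a \<in> A \<Longrightarrow> t a < length bs \<and> a \<in> bs ! t a"
    and between: "\<And>a. a \<in> A \<Longrightarrow> min (t a) s \<le> k \<and> k \<le> max (t a) s"
  shows "A \<subseteq> bs ! k"
proof
  fix a
  assume a: "a \<in> A"
  have "max (t a) s < length bs"
    using t[OF a] s by simp
  then show "a \<in> bs ! k"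
    using path_decomposition_convex[OF pd, of a "t a" s k] t[OF a] A a between[OF a] by blast
qed

text \<open>The Helly property of the intervals of bags containing a vertex.\<close>

lemma clique_in_bag:
  assumes pd: "is_path_decomposition V E bs" and "S \<noteq> {}" "S \<subseteq> V"
    and cl: "clique E S"
  shows "\<exists>i<length bs. S \<subseteq> bs ! i"
proof -
  define first where "first v = (LEAST i. i < length bs \<and> v \<in> bs ! i)" for v
  have first: "first v < length bs \<and> v \<in> bs ! first v" if v: "v \<in> S" for v
  proof -
    obtain i where "i < length bs \<and> v \<in> bs ! i"
      using path_decomposition_covers_vertex[OF pd] v \<open>S \<subseteq> V\<close> by blast
    then show ?thesis
      unfolding first_def by (rule LeastI)
  qed
  have first_le: "first v \<le> i" if "i < length bs" "v \<in> bs ! i" for v i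
    unfolding first_def using that by (simp add: Least_le)
  obtain w where w: "w \<in> S" and last: "\<And>u. u \<in> S \<Longrightarrow> first u \<le> first w"
  proof -
    obtain w0 where "w0 \<in> S"
      using \<open>S \<noteq> {}\<close> by blast
    then show ?thesis
      using ex_has_greatest_nat[of "\<lambda>v. v \<in> S" w0 first "length bs"] first that by blast
  qed
  have "u \<in> bs ! first w" if u: "u \<in> S" for u
  proof (cases "u = w")
    case True
    then show ?thesis
      using first w by blast
  next
    case False
    then obtain j where j: "j < length bs" "{u, w} \<subseteq> bs ! j"
      using path_decomposition_covers_edge[OF pd] cl u w unfolding clique_def by blast
    then have "first w \<le> j"
      using first_le by blast
    moreover have "first u \<le> first w"
      using last[OF u] .
    ultimately show ?thesis
      using path_decomposition_convex[OF pd, of u "first u" j "first w"] first[OF u] j by simp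
  qed
  then show ?thesis
    using first w by blast
qed

lemma card_bag_le_width:
  assumes "k < length bs"
  shows "int (card (bs ! k)) - 1 \<le> pd_width bs"
proof -
  have "card (bs ! k) \<le> Max (card ` set bs)"
    using assms by (intro Max_ge) auto
  then show ?thesis
    unfolding pd_width_def by simp
qed

lemma width_le_if_cards_le:
  assumes "bs \<noteq> []" "\<And>k. k < length bs \<Longrightarrow> card (bs ! k) \<le> w"
  shows "pd_width bs \<le> int w - 1"
proof -
  have "Max (card ` set bs) \<le> w"
    using assms by (auto simp: Max_le_iff in_set_conv_nth)
  then show ?thesis
    unfolding pd_width_def by simp
qed

lemma pathwidth_eqI:
  assumes "is_path_decomposition V E bs" "pd_width bs = w"
    and "\<And>bs'. is_path_decomposition V E bs' \<Longrightarrow> w \<le> pd_width bs'"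
  shows "pathwidth V E = w"
  unfolding pathwidth_def using assms by (intro Least_equality) blast+

definition interval_decomposition ::
    "'a set \<Rightarrow> ('a \<Rightarrow> nat) \<Rightarrow> ('a \<Rightarrow> nat) \<Rightarrow> nat \<Rightarrow> 'a set list" where
  "interval_decomposition V lo hi N = map (\<lambda>k. {v \<in> V. lo v \<le> k \<and> k \<le> hi v}) [0..<Suc N]"

lemma interval_decomposition_nth:
  "k \<le> N \<Longrightarrow> interval_decomposition V lo hi N ! k = {v \<in> V. lo v \<le> k \<and> k \<le> hi v}"
  unfolding interval_decomposition_def by (simp del: upt_Suc)

lemma is_path_decomposition_interval_decomposition:
  assumes interval: "\<And>v. v \<in> V \<Longrightarrow> lo v \<le> hi v \<and> hi v \<le> N"
    and edge: "\<And>e. e \<in> E \<Longrightarrow> e \<subseteq> V \<and> (\<exists>k\<le>N. \<forall>v\<in>e. lo v \<le> k \<and> k \<le> hi v)"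
  shows "is_path_decomposition V E (interval_decomposition V lo hi N)"
  unfolding is_path_decomposition_def
proof (intro conjI allI impI ballI)
  let ?bs = "interval_decomposition V lo hi N"
  have len: "length ?bs = Suc N"
    unfolding interval_decomposition_def by simp
  then show "?bs \<noteq> []"
    by auto
  show "?bs ! k \<subseteq> V" if "k < length ?bs" for k
    using that len by (simp add: interval_decomposition_nth)
  show "\<exists>k<length ?bs. v \<in> ?bs ! k" if "v \<in> V" for v
    using interval[OF that] that len by (intro exI[of _ "lo v"]) (simp add: interval_decomposition_nth)
  show "\<exists>k<length ?bs. e \<subseteq> ?bs ! k" if e: "e \<in> E" for e
  proof -
    obtain k where "k \<le> N" "\<forall>v\<in>e. lo v \<le> k \<and> k \<le> hi v" "e \<subseteq> V"
      using edge[OF e] by blast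
    then show ?thesis
      using len by (intro exI[of _ k]) (auto simp: interval_decomposition_nth)
  qed
  show "v \<in> ?bs ! j" if "i \<le> j \<and> j \<le> k \<and> k < length ?bs \<and> v \<in> ?bs ! i \<and> v \<in> ?bs ! k"
    for v i j k
  proof -
    have "i \<le> N" "j \<le> N" "k \<le> N"
      using that len by auto
    then show ?thesis
      using that by (auto simp: interval_decomposition_nth)
  qed
qed

definition corona_core :: "nat \<Rightarrow> (nat \<times> nat option) set" where
  "corona_core n = (\<lambda>i. (i, None)) ` {..<n}"

definition corona_pendant :: "nat \<Rightarrow> nat \<Rightarrow> (nat \<times> nat option) set" where
  "corona_pendant m i = (\<lambda>j. (i, Some j)) ` {..<m}"

lemma card_core_image: "card ((\<lambda>i. (i, None)) ` A :: (nat \<times> nat option) set) = card A"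
  by (simp add: card_image inj_on_def)

lemma card_corona_pendant: "card (corona_pendant m i) = m"
  unfolding corona_pendant_def by (simp add: card_image inj_on_def)

lemma finite_corona_vertices: "finite (corona_KK_vertices n m)"
proof -
  have "corona_KK_vertices n m \<subseteq> {..<n} \<times> insert None (Some ` {..<m})"
    unfolding corona_KK_vertices_def by auto
  then show ?thesis
    by (rule finite_subset) simp
qed

lemma corona_edge_cases:
  assumes "e \<in> corona_KK_edges n m"
  obtains (core) i i' where "e = {(i, None), (i', None)}" "i < n" "i' < n"
    | (pendant) i j j' where "e = {(i, Some j), (i, Some j')}" "i < n" "j < m" "j' < m"
    | (spoke) i j where "e = {(i, None), (i, Some j)}" "i < n" "j < m"
  using assms unfolding corona_KK_edges_def complete_edges_def by blast

lemma clique_corona_core: "clique (corona_KK_edges n m) (corona_core n)"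
  unfolding clique_def corona_core_def corona_KK_edges_def complete_edges_def by blast

lemma clique_corona_star:
  assumes "i < n"
  shows "clique (corona_KK_edges n m) (insert (i, None) (corona_pendant m i))"
  unfolding clique_def
proof (intro ballI impI)
  fix x y
  assume "x \<in> insert (i, None) (corona_pendant m i)" "y \<in> insert (i, None) (corona_pendant m i)"
    and "x \<noteq> y"
  then consider j where "{x, y} = {(i, None), (i, Some j)}" "j < m"
    | j j' where "x = (i, Some j)" "y = (i, Some j')" "j < m" "j' < m"
    unfolding corona_pendant_def by auto
  then show "{x, y} \<in> corona_KK_edges n m"
  proof cases
    case 2
    then have "{x, y} \<in> complete_edges {(i, Some j) | j. j < m}"
      using \<open>x \<noteq> y\<close> unfolding complete_edges_def by blast
    then show ?thesis
      using assms unfolding corona_KK_edges_def by blast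
  qed (use assms in \<open>auto simp: corona_KK_edges_def\<close>)
qed

lemma corona_core_in_bag:
  assumes "is_path_decomposition (corona_KK_vertices n m) (corona_KK_edges n m) bs" "n \<ge> 1"
  obtains s where "s < length bs" "corona_core n \<subseteq> bs ! s"
  using clique_in_bag[OF assms(1) _ _ clique_corona_core] assms(2)
  unfolding corona_core_def corona_KK_vertices_def by fastforce

lemma corona_star_in_bag:
  assumes "is_path_decomposition (corona_KK_vertices n m) (corona_KK_edges n m) bs" "i < n"
  shows "\<exists>t<length bs. insert (i, None) (corona_pendant m i) \<subseteq> bs ! t"
  using clique_in_bag[OF assms(1) _ _ clique_corona_star[OF assms(2)]] assms(2)
  unfolding corona_pendant_def corona_KK_vertices_def by fastforce

subsection \<open>Lower bound\<close>

lemma finite_corona_bag: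
  "is_path_decomposition (corona_KK_vertices n m) (corona_KK_edges n m) bs \<Longrightarrow> k < length bs
    \<Longrightarrow> finite (bs ! k)"
  using path_decomposition_bag_subset finite_corona_vertices finite_subset by metis

lemma corona_width_ge_core:
  assumes "is_path_decomposition (corona_KK_vertices n m) (corona_KK_edges n m) bs" "n \<ge> 1"
  shows "int n - 1 \<le> pd_width bs"
proof -
  obtain s where s: "s < length bs" "corona_core n \<subseteq> bs ! s"
    using corona_core_in_bag[OF assms] .
  then have "n \<le> card (bs ! s)"
    using card_mono[OF finite_corona_bag[OF assms(1) s(1)] s(2)] card_core_image[of "{..<n}"]
    unfolding corona_core_def by simp
  then show ?thesis
    using card_bag_le_width[OF s(1)] by linarith
qed

lemma corona_width_ge_cores_between:
  assumes pd: "is_path_decomposition (corona_KK_vertices n m) (corona_KK_edges n m) bs"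
    and s: "s < length bs" "corona_core n \<subseteq> bs ! s"
    and t: "\<And>i. i < n \<Longrightarrow> t i < length bs \<and> insert (i, None) (corona_pendant m i) \<subseteq> bs ! t i"
    and A: "A \<subseteq> {..<n}" "i0 \<in> A"
    and between: "\<And>i. i \<in> A \<Longrightarrow> min (t i) s \<le> t i0 \<and> t i0 \<le> max (t i) s"
  shows "int (card A) + int m - 1 \<le> pd_width bs"
proof -
  let ?B = "bs ! t i0"
  have "(\<lambda>i. (i, None)) ` A \<subseteq> ?B"
  proof (rule subset_bag_between[OF pd _ s(1)])
    show "(\<lambda>i. (i, None)) ` A \<subseteq> bs ! s"
      using s(2) A unfolding corona_core_def by auto
    show "t (fst v) < length bs \<and> v \<in> bs ! t (fst v)" if "v \<in> (\<lambda>i. (i, None)) ` A" for v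
      using that t A by auto
    show "min (t (fst v)) s \<le> t i0 \<and> t i0 \<le> max (t (fst v)) s"
      if "v \<in> (\<lambda>i. (i, None)) ` A" for v
      using that between by auto
  qed
  moreover have "corona_pendant m i0 \<subseteq> ?B"
    using t A by blast
  ultimately have "card ((\<lambda>i. (i, None)) ` A \<union> corona_pendant m i0) \<le> card ?B"
    using finite_corona_bag[OF pd] t A by (intro card_mono) auto
  moreover have "card ((\<lambda>i. (i, None)) ` A \<union> corona_pendant m i0) = card A + m"
  proof -
    have "finite A"
      using A finite_subset by blast
    moreover have "finite (corona_pendant m i0)"
      unfolding corona_pendant_def by simp
    moreover have "(\<lambda>i. (i, None)) ` A \<inter> corona_pendant m i0 = {}"
      unfolding corona_pendant_def by auto
    ultimately show ?thesis
      by (simp add: card_Un_disjoint card_core_image card_corona_pendant)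
  qed
  ultimately show ?thesis
    using card_bag_le_width[of "t i0" bs] t A by force
qed

lemma corona_width_ge_pendant:
  assumes pd: "is_path_decomposition (corona_KK_vertices n m) (corona_KK_edges n m) bs"
    and "n \<ge> 1"
  shows "int (n - n div 2) + int m - 1 \<le> pd_width bs"
proof -
  obtain s where s: "s < length bs" "corona_core n \<subseteq> bs ! s"
    using corona_core_in_bag[OF assms] .
  obtain t where t: "\<And>i. i < n \<Longrightarrow>
      t i < length bs \<and> insert (i, None) (corona_pendant m i) \<subseteq> bs ! t i"
    using corona_star_in_bag[OF pd] by metis
  note width_ge = corona_width_ge_cores_between[OF pd s t]
  define L where "L = {i. i < n \<and> t i \<le> s}"
  define R where "R = {i. i < n \<and> s \<le> t i}"
  have "{..<n} = L \<union> R"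
    unfolding L_def R_def by auto
  then have "n \<le> card L + card R"
    by (metis card_Un_le card_lessThan)
  then consider "n - n div 2 \<le> card L" | "n - n div 2 \<le> card R"
    by linarith
  then show ?thesis
  proof cases
    case 1
    then have "L \<noteq> {}"
      using \<open>n \<ge> 1\<close> by auto
    then obtain i0 where "i0 \<in> L" "\<And>i. i \<in> L \<Longrightarrow> t i \<le> t i0"
      using ex_has_greatest_nat[of "\<lambda>i. i \<in> L" _ t "length bs"] t unfolding L_def by blast
    then have "int (card L) + int m - 1 \<le> pd_width bs"
      by (intro width_ge[of L i0]) (auto simp: L_def)
    then show ?thesis
      using 1 by linarith
  next
    case 2
    then have "R \<noteq> {}"
      using \<open>n \<ge> 1\<close> by auto
    then obtain i0 where "i0 \<in> R" "\<And>i. i \<in> R \<Longrightarrow> t i0 \<le> t i"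
      using ex_has_least_nat[of "\<lambda>i. i \<in> R" _ t] by blast
    then have "int (card R) + int m - 1 \<le> pd_width bs"
      by (intro width_ge[of R i0]) (auto simp: R_def)
    then show ?thesis
      using 2 by linarith
  qed
qed

subsection \<open>Upper bound\<close>

text \<open>
  With a = n div 2, the pendant copy of core vertex i is placed in the single bag slot(i), and the
  core vertex itself is kept from bag slot(i) to the middle bag a, which holds the whole core.
\<close>

definition corona_slot :: "nat \<Rightarrow> nat \<Rightarrow> nat" where
  "corona_slot a i = (if i < a then i else Suc i)"

fun corona_lo :: "nat \<Rightarrow> nat \<times> nat option \<Rightarrow> nat" where
  "corona_lo a (i, None) = min (corona_slot a i) a"
| "corona_lo a (i, Some _) = corona_slot a i"

fun corona_hi :: "nat \<Rightarrow> nat \<times> nat option \<Rightarrow> nat" where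
  "corona_hi a (i, None) = max (corona_slot a i) a"
| "corona_hi a (i, Some _) = corona_slot a i"

definition corona_decomposition :: "nat \<Rightarrow> nat \<Rightarrow> (nat \<times> nat option) set list" where
  "corona_decomposition n m =
     interval_decomposition (corona_KK_vertices n m) (corona_lo (n div 2)) (corona_hi (n div 2)) n"

lemma is_path_decomposition_corona_decomposition:
  "is_path_decomposition (corona_KK_vertices n m) (corona_KK_edges n m) (corona_decomposition n m)"
  unfolding corona_decomposition_def
proof (rule is_path_decomposition_interval_decomposition)
  let ?a = "n div 2"
  show "corona_lo ?a v \<le> corona_hi ?a v \<and> corona_hi ?a v \<le> n" if "v \<in> corona_KK_vertices n m" for v
    using that unfolding corona_KK_vertices_def by (auto simp: corona_slot_def)
  show "e \<subseteq> corona_KK_vertices n m \<and>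
      (\<exists>k\<le>n. \<forall>v\<in>e. corona_lo ?a v \<le> k \<and> k \<le> corona_hi ?a v)"
    if "e \<in> corona_KK_edges n m" for e
    using that
  proof (cases rule: corona_edge_cases)
    case (core i i')
    then show ?thesis
      unfolding corona_KK_vertices_def by (intro conjI exI[of _ ?a]) (auto simp: corona_slot_def)
  next
    case (pendant i j j')
    then show ?thesis
      unfolding corona_KK_vertices_def
      by (intro conjI exI[of _ "corona_slot ?a i"]) (auto simp: corona_slot_def)
  next
    case (spoke i j)
    then show ?thesis
      unfolding corona_KK_vertices_def
      by (intro conjI exI[of _ "corona_slot ?a i"]) (auto simp: corona_slot_def)
  qed
qed

lemma card_core_union_pendant_le:
  "finite C \<Longrightarrow> card ((\<lambda>i. (i, None)) ` C \<union> corona_pendant m p) \<le> card C + m"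
  using card_Un_le[of "(\<lambda>i. (i, None)) ` C" "corona_pendant m p"]
  by (simp add: card_core_image card_corona_pendant)

lemma card_corona_decomposition_bag:
  assumes "k < length (corona_decomposition n m)"
  shows "card (corona_decomposition n m ! k) \<le> n + (m - n div 2)"
proof -
  let ?a = "n div 2" and ?core = "\<lambda>C. (\<lambda>i. (i, None)) ` C :: (nat \<times> nat option) set"
  have k: "k \<le> n"
    using assms unfolding corona_decomposition_def interval_decomposition_def by simp
  let ?B = "{v \<in> corona_KK_vertices n m. corona_lo ?a v \<le> k \<and> k \<le> corona_hi ?a v}"
  have bag: "corona_decomposition n m ! k = ?B"
    using k unfolding corona_decomposition_def by (rule interval_decomposition_nth)
  consider "k = ?a" | "k < ?a" | "?a < k"
    by linarith
  then have "card ?B \<le> n + (m - ?a)"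
  proof cases
    case 1
    then have "?B \<subseteq> ?core {..<n}"
      unfolding corona_KK_vertices_def by (auto simp: corona_slot_def split: if_splits)
    then show ?thesis
      using card_mono[of "?core {..<n}" ?B] card_core_image[of "{..<n}"] by simp
  next
    case 2
    then have "?B \<subseteq> ?core {..k} \<union> corona_pendant m k"
      unfolding corona_KK_vertices_def corona_pendant_def
      by (auto simp: corona_slot_def split: if_splits)
    then have "card ?B \<le> card (?core {..k} \<union> corona_pendant m k)"
      by (intro card_mono) (auto simp: corona_pendant_def)
    also have "\<dots> \<le> Suc k + m"
      using card_core_union_pendant_le[of "{..k}" m k] by simp
    finally show ?thesis
      using 2 by linarith
  next
    case 3
    then have "?B \<subseteq> ?core {k - 1..<n} \<union> corona_pendant m (k - 1)"
      unfolding corona_KK_vertices_def corona_pendant_def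
      by (auto simp: corona_slot_def split: if_splits)
    then have "card ?B \<le> card (?core {k - 1..<n} \<union> corona_pendant m (k - 1))"
      by (intro card_mono) (auto simp: corona_pendant_def)
    also have "\<dots> \<le> n - (k - 1) + m"
      using card_core_union_pendant_le[of "{k - 1..<n}" m "k - 1"] by simp
    finally show ?thesis
      using 3 by linarith
  qed
  then show ?thesis
    using bag by simp
qed

theorem mainTheorem20:
  fixes n m :: nat
  assumes "n \<ge> 2" and "m \<ge> 1"
  shows "pathwidth (corona_KK_vertices n m) (corona_KK_edges n m)
           = int n + max 0 (int m - int (n div 2)) - 1"
proof -
  \<comment> \<open>The formula also holds for m = 0; only n \<ge> 1 is needed.\<close>
  let ?w = "int n + max 0 (int m - int (n div 2)) - 1"
  have pd: "is_path_decomposition (corona_KK_vertices n m) (corona_KK_edges n m)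
      (corona_decomposition n m)"
    by (rule is_path_decomposition_corona_decomposition)
  have lower: "?w \<le> pd_width bs"
    if "is_path_decomposition (corona_KK_vertices n m) (corona_KK_edges n m) bs" for bs
    using corona_width_ge_core[OF that] corona_width_ge_pendant[OF that] assms(1)
    by (simp add: of_nat_diff)
  have "pd_width (corona_decomposition n m) \<le> int (n + (m - n div 2)) - 1"
    by (intro width_le_if_cards_le card_corona_decomposition_bag)
      (simp add: corona_decomposition_def interval_decomposition_def)
  also have "\<dots> = ?w"
    by (cases "m \<le> n div 2") (simp_all add: of_nat_diff)
  finally show ?thesis
    using pathwidth_eqI[OF pd _ lower] lower[OF pd] by simp
qed

end
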